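(* Consider an asynchronous execution of the Arrow protocol for a set of requests $R$ on a tree $T$, extended by virtual broadcast messages, with requests indexed $r_0,r_1,\dots$ in the resulting queueing order. For any two requests $r_i,r_j$ with $1\le i<j$ and any node $v$ on the tree path from $v_i$ to $v_{i-1}$, it holds that $t_i+\Delta(r_i,v)\le t_j+\Delta(r_j,v)$.
   Context: Requests $r_i=(v_i,t_i)$ are issued at node $v_i$ at time $t_i\ge0$; $r_0=(v_0,0)$ is a dummy request. Arrow protocol on a weighted tree $T$: each node $u$ has a pointer $\mathrm{link}(u)$ (itself or a neighbour), initially pointing towards $v_0$ with $\mathrm{link}(v_0)=v_0$. When $r$ is issued at $v$: if $\mathrm{link}(v)=v$, $r$ is queued behind the previous request at $v$; otherwise atomically $\mathrm{find}(r)$ ("find predecessor") is sent to $\mathrm{link}(v)$ and $\mathrm{link}(v):=v$. When $u$ receives $\mathrm{find}(r)$ from $w$: if $\mathrm{link}(u)=u$, atomically $r$ is queued behind the last request issued at $u$ and $\mathrm{link}(u):=w$; otherwise it is atomically forwarded to $\mathrm{link}(u)$ and $\mathrm{link}(u):=w$. Asynchronous: each message delay over edge $e$ is at most the weight $w(e)$. Virtual extension: for analysis, the "find predecessor" message of each request is additionally broadcast to the whole tree by virtual messages that do not influence the protocol; real messages keep their delays, every virtual message over edge $e$ has delay exactly $w(e)$, and when a real and a virtual message reach a node at the same time, the real one is processed first. For a request $r$ and node $u$, $\Delta(r,u)$ denotes the time the "find predecessor" message of $r$ needs (from its issue) to reach node $u$. *)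

theory Defs
  imports Main "HOL.Real"
begin

definition is_path :: "('v \<Rightarrow> 'v \<Rightarrow> bool) \<Rightarrow> 'v list \<Rightarrow> 'v \<Rightarrow> 'v \<Rightarrow> bool" where
  "is_path E p u w \<longleftrightarrow> p \<noteq> [] \<and> hd p = u \<and> last p = w \<and> distinct p \<and>
     (\<forall>i. Suc i < length p \<longrightarrow> E (p ! i) (p ! Suc i))"

definition is_tree :: "'v set \<Rightarrow> ('v \<Rightarrow> 'v \<Rightarrow> bool) \<Rightarrow> bool" where
  "is_tree V E \<longleftrightarrow> finite V \<and> V \<noteq> {} \<and>
     (\<forall>u w. E u w \<longrightarrow> u \<in> V \<and> w \<in> V \<and> u \<noteq> w \<and> E w u) \<and>
     (\<forall>u\<in>V. \<forall>w\<in>V. \<exists>!p. is_path E p u w)"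

definition weighted :: "('v \<Rightarrow> 'v \<Rightarrow> bool) \<Rightarrow> ('v \<Rightarrow> 'v \<Rightarrow> real) \<Rightarrow> bool" where
  "weighted E wt \<longleftrightarrow> (\<forall>u w. E u w \<longrightarrow> wt u w > 0 \<and> wt u w = wt w u)"

definition tpath :: "('v \<Rightarrow> 'v \<Rightarrow> bool) \<Rightarrow> 'v \<Rightarrow> 'v \<Rightarrow> 'v list" where
  "tpath E u w = (THE p. is_path E p u w)"

definition tdist :: "('v \<Rightarrow> 'v \<Rightarrow> bool) \<Rightarrow> ('v \<Rightarrow> 'v \<Rightarrow> real) \<Rightarrow> 'v \<Rightarrow> 'v \<Rightarrow> real" where
  "tdist E wt u w = (let p = tpath E u w in sum_list (map (\<lambda>(a,b). wt a b) (zip p (tl p))))"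

(* Requests are indexed by nat: request k is issued at node vr k at time tr k;
   request 0 is the dummy request (v0,0).
   State: link pointers, the last request issued at each node,
   the predecessor assigned to each request (queueing), and the real
   "find predecessor" messages in transit, as tuples
   (request, sender, receiver, sending time). *)
record 'v st =
  lnk  :: "'v \<Rightarrow> 'v"
  lastq :: "'v \<Rightarrow> nat"
  prd  :: "nat \<Rightarrow> nat option"
  msgs :: "(nat \<times> 'v \<times> 'v \<times> real) set"

(* processing events: issue of request k (at time tr k), or
   Recv k u w \<tau>: node u receives (and atomically processes) find(r_k) from w at time \<tau> *)
datatype 'v event = Issue nat | Recv nat 'v 'v real

fun ev_time :: "(nat \<Rightarrow> real) \<Rightarrow> 'v event \<Rightarrow> real" where
  "ev_time tr (Issue k) = tr k"
| "ev_time tr (Recv k u w \<tau>) = \<tau>"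

(* one atomic step; None = event not enabled (no matching message in transit
   delivered within the delay bound) *)
fun step :: "('v \<Rightarrow> 'v \<Rightarrow> real) \<Rightarrow> (nat \<Rightarrow> 'v) \<Rightarrow> (nat \<Rightarrow> real) \<Rightarrow> 'v st \<Rightarrow> 'v event \<Rightarrow> 'v st option" where
  "step wt vr tr \<sigma> (Issue k) =
     (let v = vr k in
      if lnk \<sigma> v = v then
        Some (\<sigma>\<lparr>prd := (prd \<sigma>)(k := Some (lastq \<sigma> v)), lastq := (lastq \<sigma>)(v := k)\<rparr>)
      else
        Some (\<sigma>\<lparr>msgs := insert (k, v, lnk \<sigma> v, tr k) (msgs \<sigma>),
                lnk := (lnk \<sigma>)(v := v), lastq := (lastq \<sigma>)(v := k)\<rparr>))"
| "step wt vr tr \<sigma> (Recv k u w \<tau>) =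
     (if \<exists>s. (k, w, u, s) \<in> msgs \<sigma> \<and> s \<le> \<tau> \<and> \<tau> \<le> s + wt w u then
        (let s = (SOME s. (k, w, u, s) \<in> msgs \<sigma> \<and> s \<le> \<tau> \<and> \<tau> \<le> s + wt w u);
             M = msgs \<sigma> - {(k, w, u, s)} in
         if lnk \<sigma> u = u then
           Some (\<sigma>\<lparr>msgs := M, prd := (prd \<sigma>)(k := Some (lastq \<sigma> u)), lnk := (lnk \<sigma>)(u := w)\<rparr>)
         else
           Some (\<sigma>\<lparr>msgs := insert (k, u, lnk \<sigma> u, \<tau>) M, lnk := (lnk \<sigma>)(u := w)\<rparr>))
      else None)"

fun run :: "('v \<Rightarrow> 'v \<Rightarrow> real) \<Rightarrow> (nat \<Rightarrow> 'v) \<Rightarrow> (nat \<Rightarrow> real) \<Rightarrow> 'v st \<Rightarrow> 'v event list \<Rightarrow> 'v st option" where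
  "run wt vr tr \<sigma> [] = Some \<sigma>"
| "run wt vr tr \<sigma> (e # es) =
     (case step wt vr tr \<sigma> e of None \<Rightarrow> None | Some \<sigma>' \<Rightarrow> run wt vr tr \<sigma>' es)"

definition init_st :: "('v \<Rightarrow> 'v \<Rightarrow> bool) \<Rightarrow> 'v \<Rightarrow> 'v st" where
  "init_st E v0 = \<lparr>lnk = (\<lambda>u. if u = v0 then v0 else tpath E u v0 ! 1),
                   lastq = (\<lambda>_. 0), prd = (\<lambda>_. None), msgs = {}\<rparr>"

(* a complete asynchronous execution for the requests 1..n, as the list of
   processing events in processing order (times non-decreasing), each request
   issued exactly once at its issue time, all messages delivered within their
   delay bound, and no message left in transit; \<sigma> is the final state *)
definition arrow_exec ::
  "('v \<Rightarrow> 'v \<Rightarrow> bool) \<Rightarrow> ('v \<Rightarrow> 'v \<Rightarrow> real) \<Rightarrow> 'v \<Rightarrow> nat \<Rightarrow> (nat \<Rightarrow> 'v) \<Rightarrow> (nat \<Rightarrow> real)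
     \<Rightarrow> 'v event list \<Rightarrow> 'v st \<Rightarrow> bool" where
  "arrow_exec E wt v0 n vr tr evs \<sigma> \<longleftrightarrow>
     run wt vr tr (init_st E v0) evs = Some \<sigma> \<and> msgs \<sigma> = {} \<and>
     sorted (map (ev_time tr) evs) \<and>
     (\<forall>k. length (filter (\<lambda>e. e = Issue k) evs) = (if 1 \<le> k \<and> k \<le> n then 1 else 0))"

definition real_arr :: "'v event list \<Rightarrow> (nat \<Rightarrow> 'v) \<Rightarrow> (nat \<Rightarrow> real) \<Rightarrow> nat \<Rightarrow> 'v \<Rightarrow> real set" where
  "real_arr evs vr tr k u =
     {\<tau>. \<exists>w. Recv k u w \<tau> \<in> set evs} \<union> (if u = vr k then {tr k} else {})"

(* \<Delta>(r_k,u): on the route of the real message, its arrival time; elsewhere the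
   arrival of the virtual broadcast copies, which leave each node p of the real
   route when the real message is there and travel with delay exactly w(e) per
   edge, i.e. arrive first at time (arrival at p) + tree distance(p,u);
   minus the issue time *)
definition Delta ::
  "('v \<Rightarrow> 'v \<Rightarrow> bool) \<Rightarrow> ('v \<Rightarrow> 'v \<Rightarrow> real) \<Rightarrow> 'v event list \<Rightarrow> (nat \<Rightarrow> 'v) \<Rightarrow> (nat \<Rightarrow> real)
     \<Rightarrow> nat \<Rightarrow> 'v \<Rightarrow> real" where
  "Delta E wt evs vr tr k u =
     (if real_arr evs vr tr k u \<noteq> {} then Min (real_arr evs vr tr k u)
      else Min {Min (real_arr evs vr tr k p) + tdist E wt p u | p. real_arr evs vr tr k p \<noteq> {}})
     - tr k"

end

theory Submission
  imports Defs
begin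

text \<open>
  Call the sequence of nodes visited by the real find message of request \<open>r\<^sub>k\<close> its route,
  and the times of these visits its arrival times. Invariants of the protocol show that the route
  of \<open>r\<^sub>k\<close> is the tree path from \<open>v\<^sub>k\<close> to \<open>v\<^bsub>k-1\<^esub>\<close>, traversed at
  most at unit speed, and that requests pass through every node in increasing order: a request
  reaching a node after a later one would chase that later request along the link pointers until
  it is queued behind a request other than its predecessor. Hence at a common node of two routes
  the earlier request arrives first.

  The main estimate \<open>arrival(i,x) \<le> arrival(j,p) + d(p,x)\<close> for \<open>i < j\<close>, \<open>x\<close> on the route
  of \<open>r\<^sub>i\<close> and \<open>p\<close> on the route of \<open>r\<^sub>j\<close> is proved by induction on \<open>j - i\<close>. Let \<open>g\<close>
  be the node where paths from \<open>p\<close> enter the route of \<open>r\<^sub>i\<close>. If \<open>g\<close> is on the route of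
  \<open>r\<^sub>j\<close>, the order of arrivals and the speed bound give the claim; otherwise the routes of the
  intermediate requests join \<open>v\<^bsub>j-1\<^esub>\<close> to \<open>v\<^sub>i\<close>, so one of them passes through \<open>g\<close> and
  the induction hypothesis applies twice. Since \<open>t + \<Delta>\<close> is the arrival time on the route and
  the minimum of arrival time plus distance off it, the theorem follows.
\<close>

definition walk :: "('v \<Rightarrow> 'v \<Rightarrow> bool) \<Rightarrow> 'v list \<Rightarrow> bool" where
  "walk E p \<longleftrightarrow> (\<forall>i. Suc i < length p \<longrightarrow> E (p ! i) (p ! Suc i))"

lemma walk_Nil [simp]: "walk E []"
  by (simp add: walk_def)

lemma walk_singleton [simp]: "walk E [x]"
  by (simp add: walk_def)

lemma walk_Cons: "walk E (x # p) \<longleftrightarrow> (p \<noteq> [] \<longrightarrow> E x (hd p)) \<and> walk E p"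
  unfolding walk_def by (cases p) (auto simp: nth_Cons split: nat.splits)

lemma walk_append:
  "walk E (p @ q) \<longleftrightarrow> walk E p \<and> walk E q \<and> (p \<noteq> [] \<and> q \<noteq> [] \<longrightarrow> E (last p) (hd q))"
  by (induction p) (auto simp: walk_Cons)

lemma walk_take: "walk E p \<Longrightarrow> walk E (take k p)"
  using walk_append[of E "take k p" "drop k p"] by simp

lemma walk_drop: "walk E p \<Longrightarrow> walk E (drop k p)"
  using walk_append[of E "take k p" "drop k p"] by simp

lemma walk_rev: "(\<And>a b. E a b \<Longrightarrow> E b a) \<Longrightarrow> walk E p \<Longrightarrow> walk E (rev p)"
  by (induction p) (auto simp: walk_Cons walk_append hd_rev last_rev)

lemma is_path_iff_walk:
  "is_path E p u w \<longleftrightarrow> p \<noteq> [] \<and> hd p = u \<and> last p = w \<and> distinct p \<and> walk E p"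
  by (simp add: is_path_def walk_def)

lemma walk_to_path:
  assumes "p \<noteq> []" "walk E p"
  shows "\<exists>q. is_path E q (hd p) (last p) \<and> set q \<subseteq> set p"
  using assms
proof (induction p)
  case Nil
  then show ?case by simp
next
  case (Cons x p)
  show ?case
  proof (cases "p = []")
    case True
    then show ?thesis by (auto simp: is_path_iff_walk)
  next
    case False
    then have "walk E p" "E x (hd p)" using Cons.prems by (auto simp: walk_Cons)
    with Cons.IH False obtain q where q: "is_path E q (hd p) (last p)" "set q \<subseteq> set p"
      by blast
    show ?thesis
    proof (cases "x \<in> set q")
      case True
      then obtain q1 q2 where qs: "q = q1 @ x # q2" by (meson split_list)
      have "is_path E (x # q2) x (last p)"
        using q(1) unfolding is_path_iff_walk qs by (auto simp: walk_append)
      then show ?thesis using q False qs by (auto intro!: exI[of _ "x # q2"])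
    next
      case False
      have "is_path E (x # q) x (last p)"
        using q(1) False \<open>E x (hd p)\<close> unfolding is_path_iff_walk by (auto simp: walk_Cons)
      then show ?thesis using q \<open>p \<noteq> []\<close> by (auto intro!: exI[of _ "x # q"])
    qed
  qed
qed

definition path_weight :: "('v \<Rightarrow> 'v \<Rightarrow> real) \<Rightarrow> 'v list \<Rightarrow> real" where
  "path_weight wt p = sum_list (map (\<lambda>(a, b). wt a b) (zip p (tl p)))"

lemma path_weight_Nil [simp]: "path_weight wt [] = 0"
  by (simp add: path_weight_def)

lemma path_weight_singleton [simp]: "path_weight wt [x] = 0"
  by (simp add: path_weight_def)

lemma path_weight_Cons_Cons [simp]: "path_weight wt (x # y # p) = wt x y + path_weight wt (y # p)"
  by (simp add: path_weight_def)

lemma path_weight_split: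
  "i < length p \<Longrightarrow> path_weight wt p = path_weight wt (take (Suc i) p) + path_weight wt (drop i p)"
proof (induction p arbitrary: i)
  case Nil
  then show ?case by simp
next
  case (Cons x p)
  show ?case
  proof (cases i)
    case 0
    then show ?thesis by simp
  next
    case (Suc i')
    then obtain y p' where p: "p = y # p'" using Cons.prems by (cases p) auto
    have "path_weight wt p = path_weight wt (take (Suc i') p) + path_weight wt (drop i' p)"
      using Cons Suc by simp
    then show ?thesis using Suc p by (cases i') auto
  qed
qed

lemma path_weight_nonneg:
  "(\<And>a b. E a b \<Longrightarrow> wt a b > 0) \<Longrightarrow> walk E p \<Longrightarrow> path_weight wt p \<ge> 0"
proof (induction p rule: induct_list012)
  case (3 x y p)
  then show ?case by (fastforce simp: walk_Cons)
qed simp_all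

lemma tdist_eq_path_weight: "tdist E wt u w = path_weight wt (tpath E u w)"
  by (simp add: tdist_def path_weight_def Let_def)

locale tree_graph =
  fixes V :: "'v set" and E :: "'v \<Rightarrow> 'v \<Rightarrow> bool"
  assumes tree: "is_tree V E"
begin

lemma edge_in_V: "E u w \<Longrightarrow> u \<in> V \<and> w \<in> V"
  using tree by (auto simp: is_tree_def)

lemma edge_sym: "E u w \<Longrightarrow> E w u"
  using tree by (auto simp: is_tree_def)

lemma edge_irrefl: "E u w \<Longrightarrow> u \<noteq> w"
  using tree by (auto simp: is_tree_def)

lemma ex1_path: "u \<in> V \<Longrightarrow> w \<in> V \<Longrightarrow> \<exists>!p. is_path E p u w"
  using tree by (auto simp: is_tree_def)

lemma is_path_tpath: "u \<in> V \<Longrightarrow> w \<in> V \<Longrightarrow> is_path E (tpath E u w) u w"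
  unfolding tpath_def using ex1_path by (rule theI')

lemma tpath_eqI: "u \<in> V \<Longrightarrow> w \<in> V \<Longrightarrow> is_path E p u w \<Longrightarrow> tpath E u w = p"
  unfolding tpath_def using ex1_path by (rule the1_equality)

lemma walk_set_subset:
  assumes "walk E p" "p \<noteq> []" "hd p \<in> V"
  shows "set p \<subseteq> V"
proof
  fix x assume "x \<in> set p"
  then obtain i where i: "i < length p" "p ! i = x" by (auto simp: in_set_conv_nth)
  show "x \<in> V"
  proof (cases i)
    case 0
    then show ?thesis using assms i by (simp add: hd_conv_nth)
  next
    case (Suc i')
    then show ?thesis using assms i edge_in_V by (auto simp: walk_def)
  qed
qed

lemma tpath_set_subset: "u \<in> V \<Longrightarrow> w \<in> V \<Longrightarrow> set (tpath E u w) \<subseteq> V"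
  using walk_set_subset is_path_tpath by (metis is_path_iff_walk)

lemma tpath_refl: "u \<in> V \<Longrightarrow> tpath E u u = [u]"
  by (rule tpath_eqI) (auto simp: is_path_iff_walk)

lemma tdist_self: "u \<in> V \<Longrightarrow> tdist E wt u u = 0"
  by (simp add: tdist_eq_path_weight tpath_refl)

lemma start_in_tpath: "u \<in> V \<Longrightarrow> w \<in> V \<Longrightarrow> u \<in> set (tpath E u w)"
  using is_path_tpath[of u w] by (metis is_path_iff_walk hd_in_set)

lemma end_in_tpath: "u \<in> V \<Longrightarrow> w \<in> V \<Longrightarrow> w \<in> set (tpath E u w)"
  using is_path_tpath[of u w] by (metis is_path_iff_walk last_in_set)

lemma tdist_nonneg: "weighted E wt \<Longrightarrow> u \<in> V \<Longrightarrow> w \<in> V \<Longrightarrow> tdist E wt u w \<ge> 0"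
  unfolding tdist_eq_path_weight using is_path_tpath[of u w]
  by (intro path_weight_nonneg[of E]) (auto simp: weighted_def is_path_iff_walk)

lemma is_path_segment:
  assumes "is_path E p u w" "a \<le> b" "b < length p"
  shows "is_path E (take (Suc b - a) (drop a p)) (p ! a) (p ! b)"
  using assms by (auto simp: is_path_iff_walk walk_take walk_drop hd_conv_nth last_conv_nth)

lemma tpath_segment:
  assumes "u \<in> V" "w \<in> V" "a \<le> b" "b < length (tpath E u w)"
  shows "tpath E (tpath E u w ! a) (tpath E u w ! b) = take (Suc b - a) (drop a (tpath E u w))"
proof -
  have "set (tpath E u w) \<subseteq> V" using tpath_set_subset assms by blast
  then have "tpath E u w ! a \<in> V" "tpath E u w ! b \<in> V" using assms by auto
  then show ?thesis using is_path_segment[OF is_path_tpath[OF assms(1,2)] assms(3,4)] tpath_eqI by blast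
qed

lemma is_path_rev: "is_path E p u w \<Longrightarrow> is_path E (rev p) w u"
  unfolding is_path_iff_walk using walk_rev[of E p] edge_sym by (auto simp: hd_rev last_rev)
lemma tpath_subset_tpath:
  assumes "a \<in> V" "b \<in> V" "y \<in> set (tpath E a b)" "z \<in> set (tpath E a b)"
  shows "set (tpath E y z) \<subseteq> set (tpath E a b)"
proof -
  let ?P = "tpath E a b"
  obtain i j where ij: "i < length ?P" "?P ! i = y" "j < length ?P" "?P ! j = z"
    using assms by (auto simp: in_set_conv_nth)
  have yz: "y \<in> V" "z \<in> V" using tpath_set_subset assms by blast+
  show ?thesis
  proof (cases "i \<le> j")
    case True
    have "tpath E y z = take (Suc j - i) (drop i ?P)"
      using is_path_segment[OF is_path_tpath[OF assms(1,2)] True ij(3)] ij yz tpath_eqI by metis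
    then show ?thesis by (metis set_drop_subset set_take_subset subset_trans)
  next
    case False
    have "is_path E (take (Suc i - j) (drop j ?P)) z y"
      using is_path_segment[OF is_path_tpath[OF assms(1,2)], of j i] False ij by auto
    then have "tpath E y z = rev (take (Suc i - j) (drop j ?P))"
      using is_path_rev tpath_eqI yz by blast
    then show ?thesis by (metis set_rev set_drop_subset set_take_subset subset_trans)
  qed
qed

lemma tdist_via:
  assumes "a \<in> V" "c \<in> V" "b \<in> set (tpath E a c)"
  shows "tdist E wt a c = tdist E wt a b + tdist E wt b c"
proof -
  let ?P = "tpath E a c"
  obtain i where i: "i < length ?P" "?P ! i = b" using assms by (auto simp: in_set_conv_nth)
  have P: "is_path E ?P a c" using is_path_tpath assms by blast
  have bV: "b \<in> V" using tpath_set_subset assms by blast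
  have "is_path E (take (Suc i) ?P) a b"
    using is_path_segment[OF P, of 0 i] i P by (auto simp: is_path_iff_walk hd_conv_nth)
  then have 1: "tpath E a b = take (Suc i) ?P" using tpath_eqI assms bV by blast
  have "is_path E (drop i ?P) b c"
    using is_path_segment[OF P, of i "length ?P - 1"] i P
    by (auto simp: is_path_iff_walk last_conv_nth)
  then have 2: "tpath E b c = drop i ?P" using tpath_eqI assms bV by blast
  show ?thesis unfolding tdist_eq_path_weight 1 2 using path_weight_split i(1) by blast
qed

lemma tpath_subset_Un:
  assumes "a \<in> V" "b \<in> V" "c \<in> V"
  shows "set (tpath E a c) \<subseteq> set (tpath E a b) \<union> set (tpath E b c)"
proof -
  let ?p = "tpath E a b" and ?q = "tpath E b c"
  have p: "is_path E ?p a b" and q: "is_path E ?q b c" using is_path_tpath assms by blast+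
  let ?w = "?p @ tl ?q"
  have chq: "walk E ?q" using q by (simp add: is_path_iff_walk)
  have "walk E (tl ?q)" using walk_drop[OF chq, of 1] by (simp add: drop_Suc)
  moreover have "tl ?q \<noteq> [] \<Longrightarrow> E b (hd (tl ?q))"
    using q by (cases ?q; cases "tl ?q") (auto simp: is_path_iff_walk walk_Cons)
  ultimately have "walk E ?w" using p by (auto simp: walk_append is_path_iff_walk)
  moreover have "?w \<noteq> []" "hd ?w = a" "last ?w = c"
    using p q by (auto simp: is_path_iff_walk last_append; cases ?q; auto simp: last_tl)+
  ultimately obtain r where r: "is_path E r a c" "set r \<subseteq> set ?w"
    using walk_to_path by metis
  have "tpath E a c = r" using tpath_eqI r assms by blast
  moreover have "set ?w \<subseteq> set ?p \<union> set ?q" by (cases ?q) auto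
  ultimately show ?thesis using r by auto
qed

lemma is_path_append:
  assumes "is_path E p1 a b" "is_path E p2 b c" "set p1 \<inter> set p2 \<subseteq> {b}"
  shows "is_path E (p1 @ tl p2) a c"
proof -
  obtain x2 where p2: "p2 = b # x2" using assms(2) by (cases p2) (auto simp: is_path_iff_walk)
  have "b \<notin> set x2" using assms(2) p2 by (auto simp: is_path_iff_walk)
  then have disj: "set p1 \<inter> set x2 = {}" using assms(3) p2 by auto
  show ?thesis using assms disj p2
    by (auto simp: is_path_iff_walk walk_append walk_Cons last_append)
qed

lemma tpath_gate:
  assumes "p \<in> V" "a \<in> V" "b \<in> V"
  shows "\<exists>g\<in>set (tpath E a b). \<forall>y\<in>set (tpath E a b). g \<in> set (tpath E p y)"
proof -
  \<comment> \<open>\<open>g\<close>: the first node of the path from \<open>p\<close> to \<open>a\<close> that lies on the path from \<open>a\<close> to \<open>b\<close>\<close>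
  let ?P = "tpath E a b" and ?q = "tpath E p a"
  have q: "is_path E ?q p a" using is_path_tpath assms by blast
  have "\<exists>i. i < length ?q \<and> ?q ! i \<in> set ?P"
    using q start_in_tpath[OF assms(2,3)] by (auto simp: is_path_iff_walk last_conv_nth intro!: exI[of _ "length ?q - 1"])
  define i where "i = (LEAST i. i < length ?q \<and> ?q ! i \<in> set ?P)"
  have i: "i < length ?q" "?q ! i \<in> set ?P"
    using LeastI_ex[OF \<open>\<exists>i. _\<close>] unfolding i_def by blast+
  have before: "j < i \<Longrightarrow> ?q ! j \<notin> set ?P" for j
    using not_less_Least[of j "\<lambda>i. i < length ?q \<and> ?q ! i \<in> set ?P"] i unfolding i_def[symmetric] by auto
  let ?x = "?q ! i"
  have q1: "is_path E (take (Suc i) ?q) p ?x"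
    using is_path_segment[OF q, of 0 i] i q by (auto simp: is_path_iff_walk hd_conv_nth)
  have xV: "?x \<in> V" using tpath_set_subset[OF assms(2,3)] i by blast
  show ?thesis
  proof (intro bexI[OF _ i(2)] ballI)
    fix y assume y: "y \<in> set ?P"
    have yV: "y \<in> V" using tpath_set_subset[OF assms(2,3)] y by blast
    have r: "is_path E (tpath E ?x y) ?x y" using is_path_tpath xV yV by blast
    have rs: "set (tpath E ?x y) \<subseteq> set ?P" using tpath_subset_tpath assms i y by blast
    have "set (take (Suc i) ?q) \<inter> set (tpath E ?x y) \<subseteq> {?x}"
    proof
      fix z assume z: "z \<in> set (take (Suc i) ?q) \<inter> set (tpath E ?x y)"
      then obtain j where j: "j < Suc i" "j < length ?q" "?q ! j = z"
        by (auto simp: in_set_conv_nth)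
      have "z \<in> set ?P" using z rs by blast
      then have "\<not> j < i" using before j by auto
      then have "j = i" using j by simp
      then show "z \<in> {?x}" using j by simp
    qed
    then have "is_path E (take (Suc i) ?q @ tl (tpath E ?x y)) p y"
      using is_path_append[OF q1 r] by blast
    then have "tpath E p y = take (Suc i) ?q @ tl (tpath E ?x y)"
      using tpath_eqI assms yV by blast
    moreover have "?x \<in> set (take (Suc i) ?q)" using i by (auto simp: in_set_conv_nth intro: exI[of _ i])
    ultimately show "?x \<in> set (tpath E p y)" by simp
  qed
qed

lemma edge_tpath_next:
  assumes "u \<in> V" "w \<in> V" "u \<noteq> w"
  shows "E u (tpath E u w ! 1)"
proof -
  have p: "is_path E (tpath E u w) u w" using is_path_tpath assms by blast
  then have "1 < length (tpath E u w)"
    using assms(3) by (cases "tpath E u w") (auto simp: is_path_iff_walk)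
  then have "E (tpath E u w ! 0) (tpath E u w ! 1)" using p by (simp add: is_path_iff_walk walk_def)
  then show ?thesis using p by (metis is_path_iff_walk hd_conv_nth)
qed

lemma tpath_edge:
  assumes "E u w"
  shows "tpath E u w = [u, w]"
  using edge_in_V[OF assms] edge_irrefl[OF assms] assms
  by (intro tpath_eqI) (auto simp: is_path_iff_walk walk_Cons)

lemma tdist_edge: "E u w \<Longrightarrow> tdist E wt u w = wt u w"
  by (simp add: tdist_eq_path_weight tpath_edge)

lemma nth_in_tpath_segment:
  assumes "u \<in> V" "w \<in> V" "a \<le> c" "c \<le> b" "b < length (tpath E u w)"
  shows "tpath E u w ! c \<in> set (tpath E (tpath E u w ! a) (tpath E u w ! b))"
proof -
  let ?s = "take (Suc b - a) (drop a (tpath E u w))"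
  have "c - a < length ?s" "?s ! (c - a) = tpath E u w ! c" using assms(3-5) by simp_all
  then have "tpath E u w ! c \<in> set ?s" by (metis nth_mem)
  then show ?thesis using tpath_segment[OF assms(1,2) le_trans[OF assms(3,4)] assms(5)] by simp
qed

lemma tpath_crossing:
  assumes "p \<in> V" "\<forall>m\<le>b. f m \<in> V" "a \<le> b"
    and "x \<in> set (tpath E p (f a))" "x \<notin> set (tpath E p (f b))"
  shows "\<exists>m. a \<le> m \<and> m < b \<and> x \<in> set (tpath E (f (Suc m)) (f m))"
  using assms(3-5)
proof (induction b rule: dec_induct)
  case base
  then show ?case by simp
next
  case (step b)
  show ?case
  proof (cases "x \<in> set (tpath E p (f b))")
    case True
    then have "x \<in> set (tpath E (f (Suc b)) (f b))"
      using tpath_subset_Un[OF assms(1), of "f (Suc b)" "f b"] assms(2) step.hyps step.prems by auto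
    then show ?thesis using step.hyps by auto
  next
    case False
    then show ?thesis using step by (metis less_Suc_eq)
  qed
qed

end

lemma sorted_wrt_less_le_last:
  fixes xs :: "'a::linorder list"
  shows "sorted_wrt (<) xs \<Longrightarrow> x \<in> set xs \<Longrightarrow> x \<le> last xs"
proof (induction xs)
  case (Cons a xs)
  then show ?case by (cases "xs = []") (auto simp: less_imp_le)
qed simp

fun ev_req :: "'v event \<Rightarrow> nat" where
  "ev_req (Issue k) = k"
| "ev_req (Recv k u w \<tau>) = k"

fun ev_node :: "(nat \<Rightarrow> 'v) \<Rightarrow> 'v event \<Rightarrow> 'v" where
  "ev_node vr (Issue k) = vr k"
| "ev_node vr (Recv k u w \<tau>) = u"

lemma run_append:
  "run wt vr tr s (xs @ ys) = (case run wt vr tr s xs of None \<Rightarrow> None | Some s' \<Rightarrow> run wt vr tr s' ys)"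
  by (induction xs arbitrary: s) (auto split: option.split)

lemma nth_eq_if_filter_length_le1:
  assumes "length (filter P xs) \<le> 1" "q < length xs" "q' < length xs" "P (xs ! q)" "P (xs ! q')"
  shows "q = q'"
proof (rule ccontr)
  assume "q \<noteq> q'"
  have "{q, q'} \<subseteq> {i. i < length xs \<and> P (xs ! i)}" using assms by auto
  then have "card {q, q'} \<le> card {i. i < length xs \<and> P (xs ! i)}" by (intro card_mono) auto
  then show False using assms \<open>q \<noteq> q'\<close> by (simp add: length_filter_conv_card)
qed

locale arrow_execution = tree_graph V E for V :: "'v set" and E +
  fixes wt :: "'v \<Rightarrow> 'v \<Rightarrow> real" and v0 :: 'v and n :: nat and vr :: "nat \<Rightarrow> 'v"
    and tr :: "nat \<Rightarrow> real" and evs :: "'v event list" and \<sigma> :: "'v st"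
  assumes weights: "weighted E wt"
    and nodes: "\<forall>k\<le>n. vr k \<in> V"
    and dummy: "vr 0 = v0"
    and exec: "arrow_exec E wt v0 n vr tr evs \<sigma>"
    and order: "\<forall>k. 1 \<le> k \<and> k \<le> n \<longrightarrow> prd \<sigma> k = Some (k - 1)"
begin

abbreviation "len \<equiv> length evs"
abbreviation "ev q \<equiv> evs ! q"
abbreviation "tm q \<equiv> ev_time tr (evs ! q)"
abbreviation "rq q \<equiv> ev_req (evs ! q)"
abbreviation "nq q \<equiv> ev_node vr (evs ! q)"

text \<open>Meaningful only for \<open>p \<le> len\<close>, where the run of the first \<open>p\<close> events succeeds.\<close>

definition state :: "nat \<Rightarrow> 'v st" where
  "state p = the (run wt vr tr (init_st E v0) (take p evs))"

lemma v0_in_V: "v0 \<in> V" using nodes dummy by auto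

lemma run_take: "p \<le> len \<Longrightarrow> run wt vr tr (init_st E v0) (take p evs) = Some (state p)"
proof -
  assume p: "p \<le> len"
  have "run wt vr tr (init_st E v0) (take p evs @ drop p evs) = Some \<sigma>"
    using exec by (simp add: arrow_exec_def)
  then show ?thesis unfolding run_append state_def by (auto split: option.splits)
qed

lemma state_step: "p < len \<Longrightarrow> step wt vr tr (state p) (ev p) = Some (state (Suc p))"
proof -
  assume p: "p < len"
  have "run wt vr tr (init_st E v0) (take p evs @ [ev p]) = Some (state (Suc p))"
    using run_take[of "Suc p"] p by (simp add: take_Suc_conv_app_nth)
  then show ?thesis using run_take[of p] p by (auto simp: run_append split: option.splits)
qed

lemma state_0: "state 0 = init_st E v0" by (simp add: state_def)
lemma state_len: "state len = \<sigma>" using run_take[of len] exec by (simp add: arrow_exec_def)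
lemma msgs_final: "msgs \<sigma> = {}" using exec by (simp add: arrow_exec_def)

lemma issue_count: "length (filter (\<lambda>e. e = Issue k) evs) = (if 1 \<le> k \<and> k \<le> n then 1 else 0)"
  using exec by (simp add: arrow_exec_def)

lemma issue_range: "q < len \<Longrightarrow> ev q = Issue k \<Longrightarrow> 1 \<le> k \<and> k \<le> n"
proof -
  assume "q < len" "ev q = Issue k"
  then have "Issue k \<in> set (filter (\<lambda>e. e = Issue k) evs)" by (metis (mono_tags) nth_mem mem_Collect_eq set_filter)
  then have "length (filter (\<lambda>e. e = Issue k) evs) \<noteq> 0" by (metis length_0_conv empty_iff list.set(1))
  then show ?thesis using issue_count[of k] by (auto split: if_splits)
qed

lemma issue_unique: "q < len \<Longrightarrow> q' < len \<Longrightarrow> ev q = Issue k \<Longrightarrow> ev q' = Issue k \<Longrightarrow> q = q'"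
  using issue_count[of k] nth_eq_if_filter_length_le1[of "\<lambda>e. e = Issue k" evs q q'] by (auto split: if_splits)

lemma issue_exists: "1 \<le> k \<Longrightarrow> k \<le> n \<Longrightarrow> \<exists>q<len. ev q = Issue k"
proof -
  assume "1 \<le> k" "k \<le> n"
  then have "filter (\<lambda>e. e = Issue k) evs \<noteq> []" using issue_count[of k] by auto
  then have "Issue k \<in> set evs" by (metis (mono_tags) filter_False)
  then show ?thesis by (metis in_set_conv_nth)
qed

lemma tm_mono: "q \<le> q' \<Longrightarrow> q' < len \<Longrightarrow> tm q \<le> tm q'"
  using exec unfolding arrow_exec_def by (auto simp: sorted_iff_nth_mono)

primrec last_req :: "nat \<Rightarrow> 'v \<Rightarrow> nat" where
  "last_req 0 u = 0"
| "last_req (Suc p) u = (if nq p = u then rq p else last_req p u)"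

definition Inv :: "nat \<Rightarrow> bool" where
  "Inv p \<longleftrightarrow>
    (\<forall>u\<in>V. lnk (state p) u = u \<longrightarrow> lastq (state p) u = last_req p u \<and> vr (last_req p u) = u) \<and>
    (\<forall>u\<in>V. lnk (state p) u \<noteq> u \<longrightarrow> E u (lnk (state p) u) \<and>
        (last_req p u = 0 \<or> (\<exists>q<p. nq q = lnk (state p) u \<and> rq q = last_req p u))) \<and>
    (\<forall>k a b s. (k,a,b,s) \<in> msgs (state p) \<longrightarrow> E a b \<and>
        (\<exists>q<p. nq q = a \<and> rq q = k \<and> tm q = s) \<and> (\<exists>q<p. ev q = Issue k)) \<and>
    (\<forall>k a b s a' b' s'. (k,a,b,s) \<in> msgs (state p) \<longrightarrow> (k,a',b',s') \<in> msgs (state p) \<longrightarrow>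
        (a,b,s) = (a',b',s'))"

lemma Inv_0: "Inv 0"
proof -
  have a: "E u (lnk (init_st E v0) u)" if "u \<in> V" "u \<noteq> v0" for u
    using edge_tpath_next[of u v0] v0_in_V that by (simp add: init_st_def)
  have b: "u = v0" if "u \<in> V" "lnk (init_st E v0) u = u" for u
  proof (rule ccontr)
    assume "u \<noteq> v0"
    then have "E u (lnk (init_st E v0) u)" using a[of u] that by blast
    then show False using edge_irrefl that(2) by metis
  qed
  have c: "E u (lnk (init_st E v0) u)" if "u \<in> V" "lnk (init_st E v0) u \<noteq> u" for u
    using a[of u] that by (cases "u = v0") (simp_all add: init_st_def)
  have d: "msgs (init_st E v0) = {}" by (simp add: init_st_def)
  show ?thesis unfolding Inv_def state_0 d
  proof (intro conjI)
    show "\<forall>u\<in>V. lnk (init_st E v0) u = u \<longrightarrow> lastq (init_st E v0) u = last_req 0 u \<and> vr (last_req 0 u) = u"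
    proof (intro ballI impI)
      fix u assume u: "u \<in> V" "lnk (init_st E v0) u = u"
      then have "u = v0" using b by blast
      then show "lastq (init_st E v0) u = last_req 0 u \<and> vr (last_req 0 u) = u" using dummy by (simp add: init_st_def)
    qed
    show "\<forall>u\<in>V. lnk (init_st E v0) u \<noteq> u \<longrightarrow> E u (lnk (init_st E v0) u) \<and>
        (last_req 0 u = 0 \<or> (\<exists>q<0. nq q = lnk (init_st E v0) u \<and> rq q = last_req 0 u))"
      using c by simp
  qed simp_all
qed

lemma recv_enabled:
  "p < len \<Longrightarrow> ev p = Recv k u w \<tau> \<Longrightarrow>
    \<exists>s. (k,w,u,s) \<in> msgs (state p) \<and> s \<le> \<tau> \<and> \<tau> \<le> s + wt w u"
  using state_step[of p] by (auto split: if_splits)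

lemma step_eq_Issue:
  assumes "p < len" "ev p = Issue k"
  shows "state (Suc p) = (if lnk (state p) (vr k) = vr k then
           (state p)\<lparr>prd := (prd (state p))(k := Some (lastq (state p) (vr k))), lastq := (lastq (state p))(vr k := k)\<rparr>
         else (state p)\<lparr>msgs := insert (k, vr k, lnk (state p) (vr k), tr k) (msgs (state p)),
                lnk := (lnk (state p))(vr k := vr k), lastq := (lastq (state p))(vr k := k)\<rparr>)"
  using state_step[OF assms(1)] assms(2) by (auto simp: Let_def split: if_splits)

lemma step_eq_Recv:
  assumes "p < len" "ev p = Recv k u w \<tau>"
    and "s0 = (SOME s. (k,w,u,s) \<in> msgs (state p) \<and> s \<le> \<tau> \<and> \<tau> \<le> s + wt w u)"
  shows "state (Suc p) = (if lnk (state p) u = u then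
           (state p)\<lparr>msgs := msgs (state p) - {(k,w,u,s0)}, prd := (prd (state p))(k := Some (lastq (state p) u)),
                   lnk := (lnk (state p))(u := w)\<rparr>
         else (state p)\<lparr>msgs := insert (k,u,lnk (state p) u,\<tau>) (msgs (state p) - {(k,w,u,s0)}),
                   lnk := (lnk (state p))(u := w)\<rparr>)"
proof -
  have "\<exists>s. (k,w,u,s) \<in> msgs (state p) \<and> s \<le> \<tau> \<and> \<tau> \<le> s + wt w u" using recv_enabled assms by blast
  then show ?thesis using state_step[OF assms(1)] assms(2,3) by (auto simp: Let_def split: if_splits)
qed

lemma recv_msg_in_transit:
  assumes "p < len" "ev p = Recv k u w \<tau>"
  shows "(k,w,u,SOME s. (k,w,u,s) \<in> msgs (state p) \<and> s \<le> \<tau> \<and> \<tau> \<le> s + wt w u) \<in> msgs (state p)"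
  using someI_ex[OF recv_enabled[OF assms]] by blast

lemma lnk_step: "p < len \<Longrightarrow> lnk (state (Suc p)) x =
   (if x = nq p then (case ev p of Issue k \<Rightarrow> x | Recv k u w \<tau> \<Rightarrow> w) else lnk (state p) x)"
  by (cases "ev p") (auto simp: step_eq_Issue step_eq_Recv)

lemma lastq_step: "p < len \<Longrightarrow> lastq (state (Suc p)) x =
   (if x = nq p \<and> ev p = Issue (rq p) then rq p else lastq (state p) x)"
  by (cases "ev p") (auto simp: step_eq_Issue step_eq_Recv)

lemma prd_step: "p < len \<Longrightarrow> prd (state (Suc p)) k =
   (if k = rq p \<and> lnk (state p) (nq p) = nq p then Some (lastq (state p) (nq p)) else prd (state p) k)"
  by (cases "ev p") (auto simp: step_eq_Issue step_eq_Recv)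

lemma InvD:
  assumes "Inv p"
  shows Inv_sinkD: "\<And>u. u\<in>V \<Longrightarrow> lnk (state p) u = u \<Longrightarrow>
        lastq (state p) u = last_req p u \<and> vr (last_req p u) = u"
    and Inv_linkD: "\<And>u. u\<in>V \<Longrightarrow> lnk (state p) u \<noteq> u \<Longrightarrow> E u (lnk (state p) u) \<and>
        (last_req p u = 0 \<or> (\<exists>q<p. nq q = lnk (state p) u \<and> rq q = last_req p u))"
    and Inv_msgD: "\<And>k a b s. (k,a,b,s) \<in> msgs (state p) \<Longrightarrow> E a b \<and>
        (\<exists>q<p. nq q = a \<and> rq q = k \<and> tm q = s) \<and> (\<exists>q<p. ev q = Issue k)"
    and Inv_msg_uniqueD: "\<And>k a b s a' b' s'. (k,a,b,s) \<in> msgs (state p) \<Longrightarrow>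
        (k,a',b',s') \<in> msgs (state p) \<Longrightarrow> (a,b,s) = (a',b',s')"
  using assms unfolding Inv_def by blast+

lemma event_valid:
  assumes "p < len" "Inv p"
  shows "nq p \<in> V \<and> 1 \<le> rq p \<and> rq p \<le> n"
proof (cases "ev p")
  case (Issue k)
  then show ?thesis using issue_range[OF assms(1) Issue] nodes by auto
next
  case (Recv k u w \<tau>)
  obtain s where s: "(k,w,u,s) \<in> msgs (state p)" using recv_enabled[OF assms(1) Recv] by blast
  then obtain q where "q < p" "ev q = Issue k" "E w u" using Inv_msgD[OF assms(2) s] by blast
  then show ?thesis using issue_range[of q k] assms(1) Recv edge_in_V by auto
qed

lemma msgs_step:
  assumes p: "p < len" and inv: "Inv p"
  shows "msgs (state (Suc p)) = {m \<in> msgs (state p). fst m \<noteq> rq p} \<union>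
     (if lnk (state p) (nq p) \<noteq> nq p then {(rq p, nq p, lnk (state p) (nq p), tm p)} else {})"
proof (cases "ev p")
  case (Issue k)
  have "fst m \<noteq> k" if m_in: "m \<in> msgs (state p)" for m
  proof
    assume "fst m = k"
    then obtain a b s where "(k,a,b,s) \<in> msgs (state p)" using m_in \<open>fst m = k\<close> by (cases m) auto
    then obtain q where "q < p" "ev q = Issue k" using Inv_msgD[OF inv] by blast
    then show False using issue_unique[of q p k] p Issue by auto
  qed
  then have e1: "{m \<in> msgs (state p). fst m \<noteq> rq p} = msgs (state p)" using Issue by auto
  have e2: "msgs (state (Suc p)) = (if lnk (state p) (vr k) = vr k then msgs (state p)
      else insert (k, vr k, lnk (state p) (vr k), tr k) (msgs (state p)))"
    using step_eq_Issue[OF p Issue] by simp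
  show ?thesis unfolding e1 e2 using Issue by simp
next
  case (Recv k u w \<tau>)
  define s0 where "s0 = (SOME s. (k,w,u,s) \<in> msgs (state p) \<and> s \<le> \<tau> \<and> \<tau> \<le> s + wt w u)"
  have s0: "(k,w,u,s0) \<in> msgs (state p)" using recv_msg_in_transit[OF p Recv] unfolding s0_def .
  have uq: "m = (k,w,u,s0)" if "m \<in> msgs (state p)" "fst m = k" for m
    using that Inv_msg_uniqueD[OF inv _ s0] by (cases m) auto
  have "msgs (state p) - {(k,w,u,s0)} = {m \<in> msgs (state p). fst m \<noteq> k}"
  proof (intro set_eqI iffI)
    fix m assume "m \<in> msgs (state p) - {(k,w,u,s0)}"
    then show "m \<in> {m \<in> msgs (state p). fst m \<noteq> k}" using uq by blast
  qed auto
  then have e1: "msgs (state p) - {(k,w,u,s0)} = {m \<in> msgs (state p). fst m \<noteq> rq p}"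
    using Recv by simp
  have e2: "msgs (state (Suc p)) = (if lnk (state p) u = u then msgs (state p) - {(k,w,u,s0)}
      else insert (k,u,lnk (state p) u,\<tau>) (msgs (state p) - {(k,w,u,s0)}))"
    using step_eq_Recv[OF p Recv s0_def] by simp
  have r: "rq p = k" "nq p = u" "tm p = \<tau>" using Recv by simp_all
  show ?thesis unfolding e2 e1 r by auto
qed

lemma Inv_step_sink:
  assumes p: "p < len" and inv: "Inv p" and u: "u \<in> V" "lnk (state (Suc p)) u = u"
  shows "lastq (state (Suc p)) u = last_req (Suc p) u \<and> vr (last_req (Suc p) u) = u"
proof (cases "u = nq p")
  case True
  show ?thesis
  proof (cases "ev p")
    case (Issue k)
    then show ?thesis using True p by (simp add: lastq_step)
  next
    case (Recv k u' w \<tau>)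
    obtain s where "(k, w, u', s) \<in> msgs (state p)" using recv_enabled[OF p Recv] by blast
    then have "w \<noteq> u'" using Inv_msgD[OF inv] edge_irrefl by blast
    then show ?thesis using u True Recv p by (simp add: lnk_step)
  qed
next
  case False
  then show ?thesis using u p Inv_sinkD[OF inv, of u] by (simp add: lnk_step lastq_step)
qed

lemma Inv_step_link:
  assumes p: "p < len" and inv: "Inv p" and u: "u \<in> V" "lnk (state (Suc p)) u \<noteq> u"
  shows "E u (lnk (state (Suc p)) u) \<and> (last_req (Suc p) u = 0 \<or>
    (\<exists>q<Suc p. nq q = lnk (state (Suc p)) u \<and> rq q = last_req (Suc p) u))"
proof (cases "u = nq p")
  case True
  show ?thesis
  proof (cases "ev p")
    case (Issue k)
    then show ?thesis using True p u by (simp add: lnk_step)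
  next
    case (Recv k u' w \<tau>)
    obtain s where s: "(k, w, u', s) \<in> msgs (state p)" using recv_enabled[OF p Recv] by blast
    obtain q where q: "q < p" "nq q = w" "rq q = k" using Inv_msgD[OF inv s] by blast
    have "E u' w" using Inv_msgD[OF inv s] edge_sym by blast
    then show ?thesis using True Recv p q by (auto simp: lnk_step intro!: exI[of _ q])
  qed
next
  case False
  then have "lnk (state (Suc p)) u = lnk (state p) u" "last_req (Suc p) u = last_req p u"
    using p by (simp_all add: lnk_step)
  then show ?thesis using Inv_linkD[OF inv, of u] u by (metis less_SucI)
qed

lemma Inv_step_msg:
  assumes p: "p < len" and inv: "Inv p" and m: "(k, a, b, s) \<in> msgs (state (Suc p))"
  shows "E a b \<and> (\<exists>q<Suc p. nq q = a \<and> rq q = k \<and> tm q = s) \<and> (\<exists>q<Suc p. ev q = Issue k)"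
proof (cases "(k, a, b, s) \<in> msgs (state p)")
  case True
  then show ?thesis using Inv_msgD[OF inv True] by (metis less_SucI)
next
  case False
  then have new: "k = rq p" "a = nq p" "b = lnk (state p) (nq p)" "s = tm p"
      "lnk (state p) (nq p) \<noteq> nq p"
    using m msgs_step[OF p inv] by (auto split: if_splits)
  have "E a b" using Inv_linkD[OF inv _ new(5)] event_valid[OF p inv] new by simp
  moreover have "\<exists>q<Suc p. ev q = Issue k"
  proof (cases "ev p")
    case (Issue k')
    then show ?thesis using new by (auto intro!: exI[of _ p])
  next
    case (Recv k' u' w \<tau>)
    obtain s' where "(k', w, u', s') \<in> msgs (state p)" using recv_enabled[OF p Recv] by blast
    then obtain q where "q < p" "ev q = Issue k'" using Inv_msgD[OF inv] by blast
    then show ?thesis using new Recv by (metis ev_req.simps(2) less_SucI)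
  qed
  ultimately show ?thesis using new by (auto intro!: exI[of _ p])
qed

lemma Inv_step:
  assumes p: "p < len" and inv: "Inv p"
  shows "Inv (Suc p)"
  unfolding Inv_def
  using Inv_step_sink[OF p inv] Inv_step_link[OF p inv] Inv_step_msg[OF p inv]
    Inv_msg_uniqueD[OF inv] msgs_step[OF p inv]
  by (auto split: if_splits)

lemma Inv_holds: "p \<le> len \<Longrightarrow> Inv p"
  by (induction p) (auto simp: Inv_0 Inv_step)

lemma node_in_V: "q < len \<Longrightarrow> nq q \<in> V" using event_valid[OF _ Inv_holds] by auto
lemma req_in_range: "q < len \<Longrightarrow> 1 \<le> rq q \<and> rq q \<le> n" using event_valid[OF _ Inv_holds] by auto

lemma forward_msg:
  "q < len \<Longrightarrow> lnk (state q) (nq q) \<noteq> nq q \<Longrightarrow>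
    (rq q, nq q, lnk (state q) (nq q), tm q) \<in> msgs (state (Suc q))"
  using msgs_step[OF _ Inv_holds] by auto

lemma msg_new_or_old:
  "q < len \<Longrightarrow> (k,a,b,s) \<in> msgs (state (Suc q)) \<Longrightarrow> (k,a,b,s) \<in> msgs (state q) \<or> k = rq q"
  using msgs_step[OF _ Inv_holds] by (auto split: if_splits)

lemma msg_persist:
  "q < len \<Longrightarrow> (k,a,b,s) \<in> msgs (state q) \<Longrightarrow> rq q \<noteq> k \<Longrightarrow> (k,a,b,s) \<in> msgs (state (Suc q))"
  using msgs_step[OF _ Inv_holds] by auto

lemma prd_persist: "q < len \<Longrightarrow> rq q \<noteq> k \<Longrightarrow> prd (state (Suc q)) k = prd (state q) k"
  using prd_step by auto

lemma issue_before:
  assumes "q < len" "rq q = k"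
  shows "\<exists>q0\<le>q. ev q0 = Issue k"
proof (cases "ev q")
  case (Issue k') then show ?thesis using assms by auto
next
  case (Recv k' u w \<tau>)
  obtain s where s: "(k',w,u,s) \<in> msgs (state q)" using recv_enabled[OF assms(1) Recv] by blast
  then show ?thesis using Inv_msgD[OF Inv_holds s] assms Recv by (auto intro: less_imp_le)
qed

lemma msg_received:
  assumes "(k,a,b,s) \<in> msgs (state p)" "p \<le> len"
  shows "\<exists>q. p \<le> q \<and> q < len \<and> ev q = Recv k b a (tm q) \<and> s \<le> tm q \<and> tm q \<le> s + wt a b \<and>
            (\<forall>r. p \<le> r \<and> r < q \<longrightarrow> rq r \<noteq> k)"
  using assms
proof (induction "len - p" arbitrary: p rule: less_induct)
  case less
  show ?case
  proof (cases "p = len")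
    case True
    then show ?thesis using less.prems state_len msgs_final by auto
  next
    case False
    then have p: "p < len" using less.prems by simp
    show ?thesis
    proof (cases "rq p = k")
      case True
      show ?thesis
      proof (cases "ev p")
        case (Issue k')
        obtain q0 where "q0 < p" "ev q0 = Issue k" using Inv_msgD[OF Inv_holds less.prems(1)] less.prems by blast
        then show ?thesis using issue_unique[of q0 p k] p Issue True by auto
      next
        case (Recv k' u w \<tau>)
        obtain s' where s': "(k',w,u,s') \<in> msgs (state p)" "s' \<le> \<tau>" "\<tau> \<le> s' + wt w u"
          using recv_enabled[OF p Recv] by blast
        have "k' = k" using True Recv by simp
        then have "(a,b,s) = (w,u,s')" using Inv_msg_uniqueD[OF Inv_holds less.prems(1)] s' less.prems by blast
        then show ?thesis using Recv s' p \<open>k' = k\<close> by (auto intro!: exI[of _ p])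
      qed
    next
      case False
      have m: "(k,a,b,s) \<in> msgs (state (Suc p))" using msg_persist[OF p less.prems(1) False] .
      have "len - Suc p < len - p" "Suc p \<le> len" using p by auto
      then obtain q where q: "Suc p \<le> q" "q < len" "ev q = Recv k b a (tm q)" "s \<le> tm q" "tm q \<le> s + wt a b"
            "\<forall>r. Suc p \<le> r \<and> r < q \<longrightarrow> rq r \<noteq> k"
        using less.hyps[of "Suc p"] m by blast
      moreover have "rq r \<noteq> k" if "p \<le> r" "r < q" for r
        using q(6) False that by (cases "r = p") auto
      ultimately show ?thesis by (auto intro!: exI[of _ q])
    qed
  qed
qed

lemma queued_settled:
  assumes q: "q < len" and self: "lnk (state q) (nq q) = nq q"
  shows "Suc q \<le> r \<Longrightarrow> r \<le> len \<Longrightarrow>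
    prd (state r) (rq q) = Some (last_req q (nq q)) \<and> (\<forall>a b s. (rq q,a,b,s) \<notin> msgs (state r))"
proof (induction r rule: dec_induct)
  case base
  have "prd (state (Suc q)) (rq q) = Some (lastq (state q) (nq q))" using prd_step[OF q] self by simp
  moreover have "lastq (state q) (nq q) = last_req q (nq q)"
    using Inv_sinkD[OF Inv_holds node_in_V[OF q] self] q by simp
  moreover have "(rq q,a,b,s) \<notin> msgs (state (Suc q))" for a b s
    using msgs_step[OF q Inv_holds[OF less_imp_le[OF q]]] self by auto
  ultimately show ?case by simp
next
  case (step r)
  then have r: "r < len" by simp
  obtain q0 where q0: "q0 \<le> q" "ev q0 = Issue (rq q)" using issue_before[OF q refl] by blast
  have ne: "rq r \<noteq> rq q"
  proof
    assume eq: "rq r = rq q"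
    show False
    proof (cases "ev r")
      case (Issue k)
      then have "r = q0" using issue_unique[of r q0 "rq q"] q0 r q eq by auto
      then show False using step q0 by simp
    next
      case (Recv k u w \<tau>)
      then show False using recv_enabled[OF r Recv] step eq by auto
    qed
  qed
  have IH: "prd (state r) (rq q) = Some (last_req q (nq q))" "\<forall>a b s. (rq q,a,b,s) \<notin> msgs (state r)"
    using step.IH r by auto
  show ?case
  proof (intro conjI allI)
    show "prd (state (Suc r)) (rq q) = Some (last_req q (nq q))" using IH(1) prd_persist[OF r ne] by simp
  next
    fix a b s
    show "(rq q, a, b, s) \<notin> msgs (state (Suc r))"
      using IH(2) msg_new_or_old[OF r, of "rq q" a b s] ne by auto
  qed
qed

lemma queued_behind_predecessor:
  assumes q: "q < len" and self: "lnk (state q) (nq q) = nq q"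
  shows "last_req q (nq q) = rq q - 1"
proof -
  have "prd \<sigma> (rq q) = Some (last_req q (nq q))"
    using queued_settled[OF q self, of len] q state_len by simp
  moreover have "prd \<sigma> (rq q) = Some (rq q - 1)" using order req_in_range[OF q] by blast
  ultimately show ?thesis by simp
qed

lemma no_visit_after_queue:
  assumes q: "q < len" and self: "lnk (state q) (nq q) = nq q" and r: "q < r" "r < len"
  shows "rq r \<noteq> rq q"
proof
  assume eq: "rq r = rq q"
  obtain q0 where q0: "q0 \<le> q" "ev q0 = Issue (rq q)" using issue_before[OF q refl] by blast
  show False
  proof (cases "ev r")
    case (Issue k)
    then have "r = q0" using issue_unique[of r q0 "rq q"] q0 r q eq by auto
    then show False using r q0 by simp
  next
    case (Recv k u w \<tau>)
    then show False using recv_enabled[OF r(2) Recv] queued_settled[OF q self, of r] r eq by auto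
  qed
qed

lemma last_req_ge_persists:
  assumes minimal: "\<And>r. r < len \<Longrightarrow> rq r < m \<Longrightarrow> last_req r (nq r) < rq r"
    and "m \<le> last_req q u" "q \<le> r" "r \<le> len"
  shows "m \<le> last_req r u"
  using assms(3,4,2)
proof (induction r rule: dec_induct)
  case (step r)
  show ?case
  proof (cases "nq r = u \<and> rq r < m")
    case True
    then show ?thesis using minimal[of r] step by simp
  next
    case False
    then show ?thesis using step by auto
  qed
qed simp

text \<open>Minimal counterexample argument: if request \<open>m\<close> meets a node already passed by a request
  \<open>\<ge> m\<close>, it is not queued there (the predecessor of \<open>m\<close> is \<open>m - 1\<close>), so it is forwarded along
  the link to a node which that request passed even earlier; the chase must stop.\<close>

lemma not_overtaken:
  assumes minimal: "\<And>r. r < len \<Longrightarrow> rq r < m \<Longrightarrow> last_req r (nq r) < rq r"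
    and q: "q < len" "rq q = m"
  shows "last_req q (nq q) < m"
  using q
proof (induction "len - q" arbitrary: q rule: less_induct)
  case less
  let ?u = "nq q" and ?c = "lnk (state q) (nq q)"
  have m1: "1 \<le> m" using req_in_range[OF less.prems(1)] less.prems(2) by simp
  show ?case
  proof (rule ccontr)
    assume ge: "\<not> last_req q ?u < m"
    show False
    proof (cases "?c = ?u")
      case True
      then show False using queued_behind_predecessor[OF less.prems(1)] less.prems(2) ge m1 by simp
    next
      case False
      obtain q' where q': "q' < q" "nq q' = ?c" "rq q' = last_req q ?u"
        using Inv_linkD[OF Inv_holds[OF less_imp_le[OF less.prems(1)]] node_in_V[OF less.prems(1)] False]
          ge m1 by auto
      have msg: "(m, ?u, ?c, tm q) \<in> msgs (state (Suc q))"
        using forward_msg[OF less.prems(1) False] less.prems(2) by simp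
      obtain q'' where q'': "Suc q \<le> q''" "q'' < len" "ev q'' = Recv m ?c ?u (tm q'')"
        using msg_received[OF msg] less.prems(1) by (meson Suc_leI)
      have visit: "nq q'' = ?c" "rq q'' = m" by (subst q''(3), simp)+
      have "m \<le> last_req (Suc q') ?c" using q' ge by simp
      then have "m \<le> last_req q'' ?c"
        using last_req_ge_persists[of m "Suc q'" ?c q'', OF minimal] q'(1) q''(1,2) by simp
      moreover have "last_req q'' ?c < m"
        using less.hyps[of q''] visit q''(1,2) less.prems(1) by simp
      ultimately show False by simp
    qed
  qed
qed

lemma last_req_less: "q < len \<Longrightarrow> last_req q (nq q) < rq q"
proof (induction "rq q" arbitrary: q rule: less_induct)
  case less
  have "last_req r (nq r) < rq r" if "r < len" "rq r < rq q" for r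
    using less.hyps that by blast
  then show ?case by (rule not_overtaken[OF _ less.prems refl])
qed

lemma last_req_mono: "q \<le> r \<Longrightarrow> r \<le> len \<Longrightarrow> last_req q u \<le> last_req r u"
proof (induction r rule: dec_induct)
  case base then show ?case by simp
next
  case (step r)
  then show ?case using last_req_less[of r] by (cases "nq r = u") auto
qed

lemma last_req_ge_visit: "q < r \<Longrightarrow> r \<le> len \<Longrightarrow> nq q = u \<Longrightarrow> rq q \<le> last_req r u"
  using last_req_mono[of "Suc q" r u] by simp

lemma visit_order:
  assumes "q < len" "q' < len" "nq q = nq q'" "rq q < rq q'"
  shows "q < q'"
proof (rule ccontr)
  assume "\<not> q < q'"
  then have "q' < q" using assms(4) by (cases "q = q'") auto
  then have "rq q' \<le> last_req q (nq q)" using last_req_ge_visit[of q' q "nq q"] assms by simp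
  then show False using last_req_less[OF assms(1)] assms(4) by simp
qed

lemma visit_once:
  assumes "q < q'" "q' < len" "nq q = nq q'" "rq q = rq q'"
  shows False
  using last_req_ge_visit[of q q' "nq q'"] assms last_req_less[OF assms(2)] by simp

definition visits :: "nat \<Rightarrow> nat list" where
  "visits k = filter (\<lambda>q. rq q = k) [0..<len]"

definition route :: "nat \<Rightarrow> 'v list" where
  "route k = map (\<lambda>q. nq q) (visits k)"

definition visit_time :: "nat \<Rightarrow> nat \<Rightarrow> real" where
  "visit_time k h = tm (visits k ! h)"

lemma visits_set: "q \<in> set (visits k) \<longleftrightarrow> q < len \<and> rq q = k"
  by (auto simp: visits_def)

lemma visits_sorted: "sorted_wrt (<) (visits k)"
  unfolding visits_def by (rule sorted_wrt_filter) simp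

lemma visits_less: "h < h' \<Longrightarrow> h' < length (visits k) \<Longrightarrow> visits k ! h < visits k ! h'"
  using sorted_wrt_nth_less[OF visits_sorted] by blast

lemma visits_less_iff:
  "h < length (visits k) \<Longrightarrow> h' < length (visits k) \<Longrightarrow> visits k ! h < visits k ! h' \<longleftrightarrow> h < h'"
  using visits_less[of h h' k] visits_less[of h' h k] by (metis less_asym linorder_neqE_nat)

lemma visits_nth: "h < length (visits k) \<Longrightarrow> visits k ! h < len \<and> rq (visits k ! h) = k"
  using visits_set nth_mem by blast

lemma visits_nonempty: "1 \<le> k \<Longrightarrow> k \<le> n \<Longrightarrow> visits k \<noteq> []"
  using issue_exists[of k] visits_set[of _ k] by (metis empty_iff list.set(1) ev_req.simps(1))

lemma visit_unique:
  assumes "q \<in> set (visits k)" "q' \<in> set (visits k)" "nq q = nq q'"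
  shows "q = q'"
proof (rule ccontr)
  assume "q \<noteq> q'"
  then consider "q < q'" | "q' < q" by linarith
  then show False
    using assms visit_once[of q q'] visit_once[of q' q] by cases (auto simp: visits_set)
qed

lemma length_route: "length (route k) = length (visits k)"
  by (simp add: route_def)

lemma route_nth: "h < length (visits k) \<Longrightarrow> route k ! h = nq (visits k ! h)"
  by (simp add: route_def)

lemma route_distinct: "distinct (route k)"
proof -
  have "inj_on (\<lambda>q. nq q) (set (visits k))" by (intro inj_onI) (blast intro: visit_unique)
  moreover have "distinct (visits k)" by (simp add: visits_def)
  ultimately show ?thesis by (simp add: route_def distinct_map)
qed

lemma visits_first:
  assumes k: "1 \<le> k" "k \<le> n"
  shows "ev (visits k ! 0) = Issue k"
proof -
  obtain q0 where q0: "q0 < len" "ev q0 = Issue k" using issue_exists[OF k] by blast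
  then obtain h where h: "h < length (visits k)" "visits k ! h = q0"
    by (metis visits_set in_set_conv_nth ev_req.simps(1))
  have "0 < length (visits k)" using h(1) by (rule le_less_trans[OF le0])
  then obtain q1 where "q1 \<le> visits k ! 0" "ev q1 = Issue k"
    using issue_before visits_nth by blast
  moreover have "visits k ! 0 \<le> q0" using visits_less[of 0 h k] h by (cases h) auto
  ultimately have "q1 = q0" using issue_unique[of q1 q0 k] q0 by simp
  then show ?thesis using \<open>q1 \<le> visits k ! 0\<close> \<open>visits k ! 0 \<le> q0\<close> q0 by simp
qed

lemma visits_next:
  assumes h: "Suc h < length (visits k)"
  defines "q \<equiv> visits k ! h"
  shows "lnk (state q) (nq q) \<noteq> nq q \<and> route k ! Suc h = lnk (state q) (nq q) \<and>
         tm (visits k ! Suc h) \<le> tm q + wt (nq q) (lnk (state q) (nq q))"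
proof -
  let ?c = "lnk (state q) (nq q)"
  have q: "q < len" "rq q = k" using visits_nth[of h k] h q_def by auto
  have q': "visits k ! Suc h < len" "rq (visits k ! Suc h) = k" "q < visits k ! Suc h"
    using visits_nth[OF h] visits_less[OF _ h, of h] q_def by auto
  have forwarded: "?c \<noteq> nq q"
    using no_visit_after_queue[OF q(1) _ q'(3) q'(1)] q q' by auto
  have "(k, nq q, ?c, tm q) \<in> msgs (state (Suc q))" using forward_msg[OF q(1) forwarded] q by simp
  then obtain q'' where q'': "Suc q \<le> q''" "q'' < len" "ev q'' = Recv k ?c (nq q) (tm q'')"
     "tm q'' \<le> tm q + wt (nq q) ?c" "\<forall>r. Suc q \<le> r \<and> r < q'' \<longrightarrow> rq r \<noteq> k"
    using msg_received q(1) by (meson Suc_leI)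
  have rq'': "rq q'' = k" "nq q'' = ?c" by (subst q''(3), simp)+
  then obtain j where j: "j < length (visits k)" "visits k ! j = q''"
    using q''(2) by (metis visits_set in_set_conv_nth)
  have "h < j" using visits_less_iff[of h k j] j h q''(1) q_def by simp
  moreover have "\<not> visits k ! Suc h < q''" using q''(5) q' by auto
  then have "j \<le> Suc h" using visits_less_iff[OF h j(1)] j by auto
  ultimately have "visits k ! Suc h = q''" using j by (simp add: le_Suc_eq)
  then show ?thesis using forwarded rq'' q''(4) route_nth[OF h] by simp
qed

lemma visits_last:
  assumes k: "1 \<le> k" "k \<le> n"
  defines "q \<equiv> last (visits k)"
  shows "lnk (state q) (nq q) = nq q \<and> nq q = vr (k - 1)"
proof -
  have ne: "visits k \<noteq> []" using visits_nonempty[OF k] .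
  have qm: "q < len" "rq q = k" using visits_set[of q k] ne q_def by auto
  have queued: "lnk (state q) (nq q) = nq q"
  proof (rule ccontr)
    assume "lnk (state q) (nq q) \<noteq> nq q"
    then have "(k, nq q, lnk (state q) (nq q), tm q) \<in> msgs (state (Suc q))" using forward_msg[OF qm(1)] qm by simp
    then obtain q'' where q'': "Suc q \<le> q''" "q'' < len" "ev q'' = Recv k (lnk (state q) (nq q)) (nq q) (tm q'')"
      using msg_received qm(1) by (meson Suc_leI)
    have "rq q'' = k" by (subst q''(3), simp)
    then have "q'' \<in> set (visits k)" using q''(2) by (simp add: visits_set)
    then have "q'' \<le> q" using sorted_wrt_less_le_last[OF visits_sorted] q_def by blast
    then show False using q''(1) by simp
  qed
  have "last_req q (nq q) = k - 1" using queued_behind_predecessor[OF qm(1) queued] qm by simp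
  moreover have "vr (last_req q (nq q)) = nq q"
    using Inv_sinkD[OF Inv_holds node_in_V[OF qm(1)] queued] qm(1) by simp
  ultimately show ?thesis using queued by simp
qed

lemma route_walk: "walk E (route k)"
  unfolding walk_def
proof (intro allI impI)
  fix h assume "Suc h < length (route k)"
  then have h: "Suc h < length (visits k)" by (simp add: length_route)
  let ?q = "visits k ! h"
  have "lnk (state ?q) (nq ?q) \<noteq> nq ?q" "route k ! Suc h = lnk (state ?q) (nq ?q)"
    using visits_next[OF h] by auto
  moreover have "?q < len" using visits_nth[of h k] h by simp
  ultimately show "E (route k ! h) (route k ! Suc h)"
    using Inv_linkD[OF Inv_holds node_in_V] route_nth[of h k] h by (simp add: less_imp_le)
qed

lemma route_path:
  assumes k: "1 \<le> k" "k \<le> n"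
  shows "is_path E (route k) (vr k) (vr (k - 1))"
proof -
  have ne: "visits k \<noteq> []" using visits_nonempty[OF k] .
  have "hd (route k) = vr k"
    using visits_first[OF k] ne by (simp add: route_def hd_map hd_conv_nth)
  moreover have "last (route k) = vr (k - 1)"
    using visits_last[OF k] ne by (simp add: route_def last_map)
  ultimately show ?thesis using ne route_distinct route_walk by (simp add: is_path_iff_walk route_def)
qed

lemma route_tpath:
  assumes k: "1 \<le> k" "k \<le> n"
  shows "route k = tpath E (vr k) (vr (k - 1))"
  using tpath_eqI[OF _ _ route_path[OF k]] nodes k by simp

lemma route_subset_V: "1 \<le> k \<Longrightarrow> k \<le> n \<Longrightarrow> set (route k) \<subseteq> V"
  using route_tpath tpath_set_subset nodes by simp

lemma visit_time_route:
  assumes k: "1 \<le> k" "k \<le> n" and hh: "h \<le> h'" "h' < length (route k)"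
  shows "visit_time k h \<le> visit_time k h' \<and>
    visit_time k h' \<le> visit_time k h + tdist E wt (route k ! h) (route k ! h')"
  using hh
proof (induction h' rule: dec_induct)
  case base
  have "route k ! h \<in> V" using route_subset_V[OF k] base by auto
  then show ?case using tdist_self by simp
next
  case (step h')
  let ?P = "route k"
  have h's: "Suc h' < length (visits k)" using step by (simp add: length_route)
  have "visit_time k h' \<le> visit_time k (Suc h')"
    unfolding visit_time_def using tm_mono visits_less[OF _ h's, of h'] visits_nth[OF h's] by simp
  moreover have "visit_time k (Suc h') \<le> visit_time k h' + wt (?P ! h') (?P ! Suc h')"
    using visits_next[OF h's] route_nth[of h' k] h's unfolding visit_time_def by simp
  moreover have "wt (?P ! h') (?P ! Suc h') = tdist E wt (?P ! h') (?P ! Suc h')"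
    using tdist_edge route_walk[of k] step by (simp add: walk_def)
  moreover have "tdist E wt (?P ! h) (?P ! Suc h') =
      tdist E wt (?P ! h) (?P ! h') + tdist E wt (?P ! h') (?P ! Suc h')"
  proof (rule tdist_via)
    show "?P ! h \<in> V" "?P ! Suc h' \<in> V" using route_subset_V[OF k] step by auto
    show "?P ! h' \<in> set (tpath E (?P ! h) (?P ! Suc h'))"
      using nth_in_tpath_segment[of "vr k" "vr (k - 1)" h h' "Suc h'"] nodes k step
      unfolding route_tpath[OF k] by simp
  qed
  ultimately show ?case using step by simp
qed

definition arrival :: "nat \<Rightarrow> 'v \<Rightarrow> real" where
  "arrival k u = visit_time k (THE h. h < length (route k) \<and> route k ! h = u)"

lemma arrival_nth:
  assumes "h < length (route k)"
  shows "arrival k (route k ! h) = visit_time k h"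
proof -
  have "(THE h'. h' < length (route k) \<and> route k ! h' = route k ! h) = h"
    using route_distinct[of k] assms by (auto simp: nth_eq_iff_index_eq)
  then show ?thesis by (simp add: arrival_def)
qed

lemma arrival_order:
  assumes ij: "1 \<le> i" "i < j" and u: "u \<in> set (route i)" "u \<in> set (route j)"
  shows "arrival i u \<le> arrival j u"
proof -
  obtain h where h: "h < length (route i)" "route i ! h = u" using u by (auto simp: in_set_conv_nth)
  obtain h' where h': "h' < length (route j)" "route j ! h' = u" using u by (auto simp: in_set_conv_nth)
  have q: "visits i ! h < len" "rq (visits i ! h) = i" using visits_nth h length_route by auto
  have q': "visits j ! h' < len" "rq (visits j ! h') = j" using visits_nth h' length_route by auto
  have "nq (visits i ! h) = nq (visits j ! h')" using route_nth h h' length_route by auto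
  then have "visits i ! h < visits j ! h'" using visit_order[OF q(1) q'(1)] q q' ij by simp
  then have "visit_time i h \<le> visit_time j h'" unfolding visit_time_def using tm_mono q' by simp
  then show ?thesis using arrival_nth[OF h(1)] arrival_nth[OF h'(1)] h(2) h'(2) by simp
qed

lemma arrival_route:
  assumes k: "1 \<le> k" "k \<le> n" and xy: "x \<in> set (route k)" "y \<in> set (route k)"
  shows "arrival k y \<le> arrival k x + tdist E wt x y"
proof -
  obtain a where a: "a < length (route k)" "route k ! a = x" using xy by (auto simp: in_set_conv_nth)
  obtain b where b: "b < length (route k)" "route k ! b = y" using xy by (auto simp: in_set_conv_nth)
  show ?thesis
  proof (cases "a \<le> b")
    case True
    then show ?thesis
      using visit_time_route[OF k True b(1)] a b arrival_nth[OF a(1)] arrival_nth[OF b(1)] by simp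
  next
    case False
    then have "visit_time k b \<le> visit_time k a" using visit_time_route[OF k, of b a] a by simp
    moreover have "tdist E wt x y \<ge> 0" using tdist_nonneg[OF weights] route_subset_V[OF k] xy by auto
    ultimately show ?thesis using a b arrival_nth[OF a(1)] arrival_nth[OF b(1)] by simp
  qed
qed

lemma arrival_le_via:
  assumes "1 \<le> i" "i < j" "j \<le> n" "x \<in> set (route i)" "p \<in> set (route j)"
  shows "arrival i x \<le> arrival j p + tdist E wt p x"
  using assms
proof (induction "j - i" arbitrary: i j x p rule: less_induct)
  case less
  have i: "1 \<le> i" "i \<le> n" and j: "1 \<le> j" "j \<le> n" using less.prems by auto
  have pV: "p \<in> V" using route_subset_V[OF j] less.prems by auto
  have xV: "x \<in> V" using route_subset_V[OF i] less.prems by auto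
  obtain g where g: "g \<in> set (route i)" "\<forall>y\<in>set (route i). g \<in> set (tpath E p y)"
    using tpath_gate[OF pV, of "vr i" "vr (i - 1)"] nodes i route_tpath[OF i] by auto
  have gV: "g \<in> V" using route_subset_V[OF i] g by auto
  have "arrival i x \<le> arrival i g + tdist E wt g x"
    using arrival_route[OF i g(1) less.prems(4)] .
  moreover have "tdist E wt p x = tdist E wt p g + tdist E wt g x"
    using tdist_via[OF pV xV] g(2) less.prems(4) by blast
  moreover have "arrival i g \<le> arrival j p + tdist E wt p g"
  proof (cases "g \<in> set (route j)")
    case True
    have "arrival i g \<le> arrival j g" using arrival_order[OF i(1) less.prems(2) g(1) True] .
    also have "\<dots> \<le> arrival j p + tdist E wt p g" using arrival_route[OF j less.prems(5) True] .
    finally show ?thesis .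
  next
    case False
    have "set (tpath E p (vr (j - 1))) \<subseteq> set (route j)"
      using tpath_subset_tpath[of "vr j" "vr (j - 1)" p] nodes j less.prems(5)
        end_in_tpath route_tpath[OF j] by simp
    then have "g \<notin> set (tpath E p (vr (j - 1)))" using False by blast
    moreover have "g \<in> set (tpath E p (vr i))"
      using g(2) start_in_tpath[of "vr i" "vr (i - 1)"] nodes i route_tpath[OF i] by simp
    moreover have "\<forall>m\<le>j - 1. vr m \<in> V" "i \<le> j - 1" using nodes less.prems by auto
    ultimately obtain m where m: "i \<le> m" "m < j - 1" "g \<in> set (tpath E (vr (Suc m)) (vr m))"
      using tpath_crossing[OF pV] by blast
    then have gk: "g \<in> set (route (Suc m))" using route_tpath[of "Suc m"] less.prems by simp
    have "arrival i g \<le> arrival (Suc m) g + tdist E wt g g"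
      using less.hyps[of "Suc m" i g g] m less.prems g(1) gk by simp
    moreover have "arrival (Suc m) g \<le> arrival j p + tdist E wt p g"
      using less.hyps[of j "Suc m" g p] m less.prems gk by simp
    ultimately show ?thesis using tdist_self[OF gV] by simp
  qed
  ultimately show ?case by simp
qed

lemma real_arr_eq_visit_times:
  assumes k: "1 \<le> k" "k \<le> n"
  shows "real_arr evs vr tr k u = {tm q |q. q \<in> set (visits k) \<and> nq q = u}"
proof (intro set_eqI iffI)
  fix \<tau> assume "\<tau> \<in> real_arr evs vr tr k u"
  then consider (recv) w where "Recv k u w \<tau> \<in> set evs" | (issue) "u = vr k" "\<tau> = tr k"
    by (auto simp: real_arr_def split: if_splits)
  then show "\<tau> \<in> {tm q |q. q \<in> set (visits k) \<and> nq q = u}"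
  proof cases
    case recv
    then obtain q where q: "q < len" "ev q = Recv k u w \<tau>" by (auto simp: in_set_conv_nth)
    then have "q \<in> set (visits k)" "nq q = u" "tm q = \<tau>" by (simp_all add: visits_set)
    then show ?thesis by blast
  next
    case issue
    obtain q where q: "q < len" "ev q = Issue k" using issue_exists[OF k] by blast
    then have "q \<in> set (visits k)" "nq q = u" "tm q = \<tau>" using issue by (simp_all add: visits_set)
    then show ?thesis by blast
  qed
next
  fix \<tau> assume "\<tau> \<in> {tm q |q. q \<in> set (visits k) \<and> nq q = u}"
  then obtain q where q: "q < len" "rq q = k" "nq q = u" "\<tau> = tm q" by (auto simp: visits_set)
  then show "\<tau> \<in> real_arr evs vr tr k u"
    using nth_mem[OF q(1)] by (cases "ev q") (auto simp: real_arr_def)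
qed

lemma visit_times_at:
  "{tm q |q. q \<in> set (visits k) \<and> nq q = u} = (if u \<in> set (route k) then {arrival k u} else {})"
proof (cases "u \<in> set (route k)")
  case True
  then obtain h where h: "h < length (visits k)" "route k ! h = u"
    by (auto simp: in_set_conv_nth length_route)
  have "q \<in> set (visits k) \<and> nq q = u \<longleftrightarrow> q = visits k ! h" for q
    using visit_unique[where q = q and q' = "visits k ! h" and k = k] h route_nth[OF h(1)] nth_mem[OF h(1)] by auto
  then show ?thesis using True arrival_nth[of h k] h by (simp add: visit_time_def length_route)
next
  case False
  then show ?thesis by (auto simp: route_def)
qed

lemma issue_plus_Delta_on_route:
  assumes k: "1 \<le> k" "k \<le> n" and u: "u \<in> set (route k)"
  shows "tr k + Delta E wt evs vr tr k u = arrival k u"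
  using u by (simp add: Delta_def real_arr_eq_visit_times[OF k] visit_times_at)

lemma issue_plus_Delta_lower_bound:
  assumes k: "1 \<le> k" "k \<le> n"
    and bound: "\<And>p. p \<in> set (route k) \<Longrightarrow> c \<le> arrival k p + tdist E wt p u"
  shows "c \<le> tr k + Delta E wt evs vr tr k u"
proof (cases "u \<in> set (route k)")
  case True
  then show ?thesis
    using bound[OF True] tdist_self route_subset_V[OF k] issue_plus_Delta_on_route[OF k True] by auto
next
  case False
  let ?F = "(\<lambda>p. arrival k p + tdist E wt p u) ` set (route k)"
  have "{Min (real_arr evs vr tr k p) + tdist E wt p u | p. real_arr evs vr tr k p \<noteq> {}} = ?F"
    by (auto simp: real_arr_eq_visit_times[OF k] visit_times_at split: if_splits)
  then have "tr k + Delta E wt evs vr tr k u = Min ?F"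
    using False by (simp add: Delta_def real_arr_eq_visit_times[OF k] visit_times_at)
  moreover have "route k \<noteq> []" using visits_nonempty[OF k] by (simp add: route_def)
  ultimately show ?thesis using bound by simp
qed

end

theorem lemma13:
  fixes V :: "'v set" and E :: "'v \<Rightarrow> 'v \<Rightarrow> bool" and wt :: "'v \<Rightarrow> 'v \<Rightarrow> real"
    and v0 :: 'v and n :: nat and vr :: "nat \<Rightarrow> 'v" and tr :: "nat \<Rightarrow> real"
    and evs :: "'v event list" and \<sigma> :: "'v st" and i j :: nat and v :: 'v
  assumes tree: "is_tree V E"
    and weights: "weighted E wt"
    and nodes: "\<forall>k\<le>n. vr k \<in> V"
    and dummy: "vr 0 = v0" "tr 0 = 0"
    and times: "\<forall>k\<le>n. tr k \<ge> 0"
    and exec: "arrow_exec E wt v0 n vr tr evs \<sigma>"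
    and order: "\<forall>k. 1 \<le> k \<and> k \<le> n \<longrightarrow> prd \<sigma> k = Some (k - 1)"
    and ij: "1 \<le> i" "i < j" "j \<le> n"
    and v: "v \<in> set (tpath E (vr i) (vr (i - 1)))"
  shows "tr i + Delta E wt evs vr tr i v \<le> tr j + Delta E wt evs vr tr j v"
proof -
  interpret arrow_execution V E wt v0 n vr tr evs \<sigma>
    using tree weights nodes dummy exec order by unfold_locales (auto simp: tree_graph_def)
  have i: "1 \<le> i" "i \<le> n" and j: "1 \<le> j" "j \<le> n" using ij by auto
  have v_route: "v \<in> set (route i)" using v route_tpath[OF i] by simp
  have "tr i + Delta E wt evs vr tr i v = arrival i v"
    using issue_plus_Delta_on_route[OF i v_route] .
  also have "\<dots> \<le> tr j + Delta E wt evs vr tr j v"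
    using issue_plus_Delta_lower_bound[OF j] arrival_le_via[OF ij v_route] by blast
  finally show ?thesis .
qed

end
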